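(* Let $D, N \in \mathbb{N}^+$, let $\mathbf{W} = [\mathbf{w}_1, \dots, \mathbf{w}_N] \in \mathbb{R}^{D\times N}$ be arbitrary, and let $\mathbf{f}_t, \mathbf{f}_s \in \mathbb{R}^D$ be nonzero vectors with the same direction, i.e. $\mathbf{f}_s = c\,\mathbf{f}_t$ for some $c>0$. Define, for $\mathbf{f}, \mathbf{g} \in \mathbb{R}^D$, $$\mathcal{L}_{lsh}(\mathbf{f}, \mathbf{g}) = -\frac{1}{N}\sum_{j=1}^{N}\big[h_j \log p_j + (1-h_j)\log(1-p_j)\big],\quad h_j = \operatorname{sign}(\mathbf{w}_j^{\mathsf{T}}\mathbf{f}),\ p_j = \sigma(\mathbf{w}_j^{\mathsf{T}}\mathbf{g}),$$ where $\operatorname{sign}(x) = 1$ if $x>0$ and $\operatorname{sign}(x)=0$ otherwise, and $\sigma(x) = 1/(1+e^{-x})$. Then for every $s>1$, $$\mathcal{L}_{lsh}(\mathbf{f}_t, s\,\mathbf{f}_s) \le \mathcal{L}_{lsh}(\mathbf{f}_t, \mathbf{f}_s).$$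
   Context: This is the locality-sensitive-hashing (LSH) loss with zero bias: the teacher feature $\mathbf{f}_t$ is hashed into binary codes $h_j$ by the random hyperplanes $\mathbf{w}_j$, and the student feature $\mathbf{f}_s$ is scored by the binary cross-entropy against these codes. *)

theory Defs
  imports "HOL-Analysis.Analysis"
begin

definition hsign :: "real \<Rightarrow> real" where
  "hsign x = (if x > 0 then 1 else 0)"

definition sigmoid :: "real \<Rightarrow> real" where
  "sigmoid x = 1 / (1 + exp (- x))"

text \<open>W is a D x N matrix (type index 'd = rows, 'n = columns); w_j = column j W.\<close>
definition L_lsh :: "real ^ 'n ^ 'd \<Rightarrow> real ^ 'd \<Rightarrow> real ^ 'd \<Rightarrow> real" where
  "L_lsh W f g = - (1 / real CARD('n)) *
     (\<Sum>j\<in>UNIV. hsign (column j W \<bullet> f) * ln (sigmoid (column j W \<bullet> g))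
        + (1 - hsign (column j W \<bullet> f)) * ln (1 - sigmoid (column j W \<bullet> g)))"

end

theory Submission
  imports Defs
begin

text \<open>Scaling the student feature along the teacher direction by \<open>t\<close> turns each logit
  \<open>w\<^sub>j \<bullet> g\<close> into \<open>t a\<^sub>j\<close> with \<open>a\<^sub>j = w\<^sub>j \<bullet> f\<^sub>t\<close>. The code \<open>h\<^sub>j\<close> is 1 exactly when \<open>a\<^sub>j > 0\<close>,
  so increasing \<open>t\<close> pushes \<open>\<sigma>(t a\<^sub>j)\<close> towards 1 when the code is 1 and towards 0 otherwise:
  every log-likelihood term grows with \<open>t\<close>, hence the loss decreases along the ray.\<close>

lemma sigmoid_pos: "sigmoid x > 0"
  unfolding sigmoid_def by (simp add: add_pos_pos)

lemma sigmoid_less_one: "sigmoid x < 1"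
  unfolding sigmoid_def by (simp add: field_simps add_pos_pos)

lemma mono_sigmoid: "mono sigmoid"
  unfolding sigmoid_def
  by (intro monoI divide_left_mono) (auto intro!: add_pos_pos mult_pos_pos)

definition bce_loglik :: "real \<Rightarrow> real \<Rightarrow> real" where
  "bce_loglik h x = h * ln (sigmoid x) + (1 - h) * ln (1 - sigmoid x)"

lemma L_lsh_eq_bce_loglik:
  "L_lsh W f g = - (1 / real CARD('n)) *
     (\<Sum>j\<in>UNIV. bce_loglik (hsign (column j W \<bullet> f)) (column j (W :: real ^ 'n ^ 'd) \<bullet> g))"
  unfolding L_lsh_def bce_loglik_def ..

lemma bce_loglik_hsign_mono:
  assumes "t \<le> t'"
  shows "bce_loglik (hsign a) (t * a) \<le> bce_loglik (hsign a) (t' * a)"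
proof (cases "a > 0")
  case True
  then have "sigmoid (t * a) \<le> sigmoid (t' * a)"
    using assms by (intro monoD[OF mono_sigmoid]) simp
  then have "ln (sigmoid (t * a)) \<le> ln (sigmoid (t' * a))"
    using sigmoid_pos by simp
  with True show ?thesis by (simp add: bce_loglik_def hsign_def)
next
  case False
  then have "sigmoid (t' * a) \<le> sigmoid (t * a)"
    using assms by (intro monoD[OF mono_sigmoid]) (simp add: mult_right_mono_neg)
  then have "ln (1 - sigmoid (t * a)) \<le> ln (1 - sigmoid (t' * a))"
    using sigmoid_less_one by (simp add: diff_le_mono2)
  with False show ?thesis by (simp add: bce_loglik_def hsign_def)
qed

lemma L_lsh_scaleR_antimono:
  fixes W :: "real ^ 'n ^ 'd"
  assumes "t \<le> t'"
  shows "L_lsh W f (t' *\<^sub>R f) \<le> L_lsh W f (t *\<^sub>R f)"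
proof -
  have "(\<Sum>j\<in>UNIV. bce_loglik (hsign (column j W \<bullet> f)) (column j W \<bullet> (t *\<^sub>R f)))
      \<le> (\<Sum>j\<in>UNIV. bce_loglik (hsign (column j W \<bullet> f)) (column j W \<bullet> (t' *\<^sub>R f)))"
    using bce_loglik_hsign_mono[OF assms] by (intro sum_mono) simp
  then show ?thesis
    unfolding L_lsh_eq_bce_loglik by (simp add: divide_right_mono)
qed

theorem claim2:
  fixes W :: "real ^ 'n ^ 'd" and f_t f_s :: "real ^ 'd" and c s :: real
  assumes "f_t \<noteq> 0" and "f_s \<noteq> 0" and "c > 0" and "f_s = c *\<^sub>R f_t" and "s > 1"
  shows "L_lsh W f_t (s *\<^sub>R f_s) \<le> L_lsh W f_t f_s"
proof -
  have "c \<le> s * c"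
    using \<open>c > 0\<close> \<open>s > 1\<close> by simp
  then show ?thesis
    using L_lsh_scaleR_antimono[of c "s * c" W f_t] \<open>f_s = c *\<^sub>R f_t\<close> by simp
qed

end
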